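(* Fix an integer $n\ge 2$ and $\lambda>0$. For $\mu>0$ let $q(t)$, $t\ge 0$, be the continuous-time Markov chain on $\{0,1,\dots,n\}$ with $q(0)=0$ and transition rates: $j\to j+1$ at rate $\lambda$ for $0\le j\le n-1$; $j\to j-1$ at rate $\mu$ for $1\le j\le n-1$; the state $n$ is absorbing. Let $\tau=\inf\{t>0:\ q(t)=n\}$. Then, as $\mu\to\infty$ (with $\lambda$ and $n$ fixed), the random variable $(\lambda/\mu)^{n-1}\tau$ converges in distribution to an exponential random variable with parameter $\lambda$; that is, for every $t\ge 0$, $$\lim_{\mu\to\infty} P\big((\lambda/\mu)^{n-1}\tau>t\big)=e^{-\lambda t},$$ equivalently, for every $s\ge 0$, $\lim_{\mu\to\infty} E\, e^{-s(\lambda/\mu)^{n-1}\tau}=\frac{\lambda}{\lambda+s}$. Moreover, with $P_{n-1}(t)=P(q(t)=n-1,\ \tau>t)$ and $\varphi_{n-1}(s)=\int_0^\infty e^{-st}P_{n-1}(t)\,dt$, one has $\lambda P_{n-1}$ equal to the density of $\tau$ and $$\lim_{\mu\to\infty}\varphi_{n-1}\big((\lambda/\mu)^{n-1}s\big)=\frac{1}{\lambda+s}\quad (s\ge 0).$$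
   Context: Model interpretation: a system of $n$ identical elements, one working and the rest in reserve, with one repair device repairing one element at a time; working times are exponential with parameter $\lambda$, repair times exponential with parameter $\mu$, all independent. $q(t)$ is the number of broken elements at time $t$, and $\tau$ is the system failure time (all $n$ elements broken). *)

theory Defs
  imports "HOL-Analysis.Analysis"
begin

definition gen :: "real \<Rightarrow> real \<Rightarrow> nat \<Rightarrow> nat \<Rightarrow> nat \<Rightarrow> real" where
  "gen lam mu n i j =
     (if i \<le> n \<and> j \<le> n then
        (if j = i + 1 \<and> i < n then lam
         else if j + 1 = i \<and> 1 \<le> i \<and> i \<le> n - 1 then mu
         else if i = j then - ((if i < n then lam else 0) + (if 1 \<le> i \<and> i \<le> n - 1 then mu else 0))
         else 0)
      else 0)"

text \<open>p j t = P(q(t) = j), characterised as the solution of the Kolmogorov forward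
  equations p' = p Q on [0,\<infinity>) with initial distribution concentrated at state 0.\<close>
definition forward_dist :: "real \<Rightarrow> real \<Rightarrow> nat \<Rightarrow> (nat \<Rightarrow> real \<Rightarrow> real) \<Rightarrow> bool" where
  "forward_dist lam mu n p \<longleftrightarrow>
     (\<forall>j\<le>n. p j 0 = (if j = 0 then 1 else 0)) \<and>
     (\<forall>j\<le>n. \<forall>t\<ge>0. (p j has_real_derivative (\<Sum>i\<le>n. p i t * gen lam mu n i j)) (at t within {0..}))"

definition laplace :: "(real \<Rightarrow> real) \<Rightarrow> real \<Rightarrow> real" where
  "laplace f s = (LINT t:{0..}|lborel. exp (- s * t) * f t)"

text \<open>Laplace-Stieltjes transform E exp(-s X) of a nonnegative random variable with
  distribution function F.\<close>
definition lst :: "(real \<Rightarrow> real) \<Rightarrow> real \<Rightarrow> real" where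
  "lst F s = (\<integral>t. exp (- s * t) \<partial>interval_measure F)"

end

theory Submission
  imports Defs
begin

text \<open>
  Let \<open>m\<^sub>j\<close> be the mean absorption time from state \<open>j\<close>: it solves \<open>(Q m)\<^sub>j = -1\<close> for \<open>j < n\<close>
  and is the sum of the mean passage times \<open>d\<^sub>k\<close> from \<open>k\<close> to \<open>k + 1\<close>, \<open>j \<le> k < n\<close>.
  Hence \<open>F(t) = \<Sum>\<^sub>j m\<^sub>j p\<^sub>j(t)\<close> satisfies \<open>F' = -u\<close> for the survival function \<open>u(t) = P(\<tau> > t)\<close>,
  while \<open>d\<^sub>n\<^sub>-\<^sub>1 u \<le> F \<le> m\<^sub>0 u\<close> because \<open>d\<^sub>n\<^sub>-\<^sub>1 \<le> m\<^sub>j \<le> m\<^sub>0\<close>. Integrating these differential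
  inequalities gives \<open>exp (-t / d\<^sub>n\<^sub>-\<^sub>1) \<le> u(t) \<le> (m\<^sub>0 / d\<^sub>n\<^sub>-\<^sub>1) exp (-t / m\<^sub>0)\<close>. As \<open>\<mu> \<rightarrow> \<infinity>\<close>,
  both \<open>m\<^sub>0\<close> and \<open>d\<^sub>n\<^sub>-\<^sub>1\<close> are \<open>(\<mu>/\<lambda>)\<^sup>n\<^sup>-\<^sup>1 / \<lambda> \<cdot> (1 + o(1))\<close>, so after rescaling time by
  \<open>(\<lambda>/\<mu>)\<^sup>n\<^sup>-\<^sup>1\<close> both bounds tend to \<open>exp (-\<lambda>t)\<close>. The same bounds squeeze the Laplace
  transforms, because \<open>\<lambda> p\<^sub>n\<^sub>-\<^sub>1 = -u'\<close> is the density of \<open>\<tau>\<close>.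
\<close>

lemma mono_on_Ici_if_deriv_nonneg:
  fixes g g' :: "real \<Rightarrow> real"
  assumes "\<And>t. t \<ge> 0 \<Longrightarrow> (g has_real_derivative g' t) (at t within {0..})"
    and "\<And>t. t \<ge> 0 \<Longrightarrow> g' t \<ge> 0" and "0 \<le> s" "s \<le> t"
  shows "g s \<le> g t"
proof (rule DERIV_nonneg_imp_increasing_open[OF assms(4)])
  fix x assume "s < x" "x < t"
  then have "x \<in> interior {0..}" using assms by auto
  then show "\<exists>y. (g has_real_derivative y) (at x) \<and> 0 \<le> y"
    using assms(1,2)[of x] at_within_interior[of x "{0..}"] \<open>s < x\<close> assms(3) by auto
next
  have "continuous_on {0..} g" by (rule DERIV_continuous_on[OF assms(1)]) auto
  then show "continuous_on {s..t} g" by (rule continuous_on_subset) (use assms in auto)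
qed

lemma set_integral_Ici_FTC_nonneg:
  fixes F f :: "real \<Rightarrow> real"
  assumes deriv: "\<And>t. t \<ge> 0 \<Longrightarrow> (F has_real_derivative f t) (at t within {0..})"
    and cont: "continuous_on {0..} f" and nonneg: "\<And>t. t \<ge> 0 \<Longrightarrow> f t \<ge> 0"
    and lim: "(F \<longlongrightarrow> L) at_top" and a: "a \<ge> 0"
  shows "set_integrable lborel {a..} f \<and> (LINT t:{a..}|lborel. f t) = L - F a"
proof -
  have int: "x \<in> interior {0..}" if "x > a" for x :: real using that a by auto
  have D: "DERIV F x :> f x" if "ereal a < ereal x" for x
    using deriv[of x] that a at_within_interior[OF int[of x]] by auto
  have C: "isCont f x" if "ereal a < ereal x" for x
    using that continuous_on_interior[OF cont int] by simp
  have AE: "AE x in lborel. ereal a < ereal x \<longrightarrow> ereal x < \<infinity> \<longrightarrow> 0 \<le> f x"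
    using a by (intro AE_I2) (auto intro: nonneg)
  have "continuous (at a within {0..}) F" using deriv[OF a] by (rule DERIV_continuous)
  then have "(F \<longlongrightarrow> F a) (at_right a)"
    unfolding continuous_within by (rule tendsto_within_subset) (use a in auto)
  then have A: "((F \<circ> real_of_ereal) \<longlongrightarrow> F a) (at_right (ereal a))" by (simp add: ereal_tendsto_simps1)
  have B: "((F \<circ> real_of_ereal) \<longlongrightarrow> L) (at_left \<infinity>)" using lim by (simp add: ereal_tendsto_simps1)
  have R: "set_integrable lborel {a<..} f \<and> (LINT x:{a<..}|lborel. f x) = L - F a"
    using interval_integral_FTC_nonneg[of "ereal a" \<infinity> F f, OF _ D C AE A B]
    by (simp add: interval_integral_Ioi)
  have null: "({a<..} - {a..}) \<union> ({a..} - {a<..}) \<subseteq> {a}" by auto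
  show ?thesis
    using R set_integrable_discrete_difference[of "{a}" "{a<..}" "{a..}" lborel f]
      set_integral_discrete_difference[of "{a}" "{a<..}" "{a..}" lborel f] null
    by auto
qed

lemma tendsto_exp_neg_mult_at_top: "c > 0 \<Longrightarrow> ((\<lambda>t::real. exp (- c * t)) \<longlongrightarrow> 0) at_top"
  by (rule filterlim_compose[OF exp_at_bot filterlim_tendsto_neg_mult_at_bot[OF tendsto_const]])
     (auto intro: filterlim_ident)

lemma exp_neg_mult_integral_Ici:
  fixes c :: real
  assumes "c > 0"
  shows "set_integrable lborel {0..} (\<lambda>t. exp (- c * t)) \<and> (LINT t:{0..}|lborel. exp (- c * t)) = 1 / c"
proof -
  have "((\<lambda>t. - exp (- c * t) / c) \<longlongrightarrow> - 0 / c) at_top"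
    using assms by (intro tendsto_intros tendsto_exp_neg_mult_at_top) auto
  then have "set_integrable lborel {0..} (\<lambda>t. exp (- c * t)) \<and>
      (LINT t:{0..}|lborel. exp (- c * t)) = - 0 / c - (- exp (- c * 0) / c)"
    using assms by (intro set_integral_Ici_FTC_nonneg continuous_intros) (auto intro!: derivative_eq_intros)
  then show ?thesis by simp
qed

lemma set_borel_measurable_continuous_on_Ici:
  fixes g :: "real \<Rightarrow> real"
  shows "continuous_on {0..} g \<Longrightarrow> set_borel_measurable lborel {0..} g"
  unfolding set_borel_measurable_def measurable_lborel2
  by (rule borel_measurable_continuous_on_indicator) auto

lemma positive_on_Ici_if_barrier:
  fixes z :: "'i \<Rightarrow> real \<Rightarrow> real"
  assumes "finite I"
    and cont: "\<And>i. i \<in> I \<Longrightarrow> continuous_on {0..} (z i)"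
    and init: "\<And>i. i \<in> I \<Longrightarrow> z i 0 > 0"
    and barrier: "\<And>j t. j \<in> I \<Longrightarrow> t > 0 \<Longrightarrow> z j t = 0 \<Longrightarrow> \<forall>i\<in>I. z i t \<ge> 0 \<Longrightarrow>
                    \<exists>D>0. (z j has_real_derivative D) (at t within {0..})"
    and "j \<in> I" "t0 \<ge> 0"
  shows "z j t0 > 0"
proof (rule ccontr)
  assume "\<not> z j t0 > 0"
  define S where "S = (\<Union>i\<in>I. {t \<in> {0..t0}. z i t \<le> 0})"
  have "closed S" unfolding S_def
    by (intro closed_UN \<open>finite I\<close> ballI continuous_on_closed_Collect_le continuous_on_const
        continuous_on_subset[OF cont]) auto
  moreover have "t0 \<in> S" using \<open>\<not> z j t0 > 0\<close> assms(5,6) by (force simp: S_def)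
  moreover have bdd: "bdd_below S" by (auto simp: S_def bdd_below_def)
  ultimately have "Inf S \<in> S" using closed_contains_Inf by blast
  then obtain k where k: "k \<in> I" "z k (Inf S) \<le> 0" "0 \<le> Inf S" by (auto simp: S_def)
  have before: "z i t > 0" if "i \<in> I" "0 \<le> t" "t < Inf S" for i t
  proof (rule ccontr)
    assume "\<not> z i t > 0"
    then have "t \<in> S" using that \<open>Inf S \<in> S\<close> unfolding S_def by force
    then show False using cInf_lower[OF _ bdd] that by force
  qed
  define ts where "ts = Inf S"
  have "ts > 0" using init[OF k(1)] k unfolding ts_def by (cases "Inf S = 0") auto
  have "z i ts \<ge> 0" if "i \<in> I" for i
  proof (rule tendsto_lowerbound)
    have "isCont (z i) ts" using continuous_on_interior[OF cont[OF that]] \<open>ts > 0\<close> by simp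
    then show "(z i \<longlongrightarrow> z i ts) (at_left ts)" by (simp add: isCont_def filterlim_at_split)
    show "\<forall>\<^sub>F t in at_left ts. 0 \<le> z i t"
      unfolding eventually_at_left_field
      using \<open>ts > 0\<close> before[OF that] by (auto simp: ts_def intro!: exI[of _ 0] less_imp_le)
  qed simp
  then have "z k ts = 0" "\<forall>i\<in>I. z i ts \<ge> 0" using k by (auto simp: ts_def intro: antisym)
  then obtain D where "D > 0" "(z k has_real_derivative D) (at ts within {0..})"
    using barrier[OF k(1) \<open>ts > 0\<close>] by blast
  then obtain d where d: "d > 0" "\<And>h. h > 0 \<Longrightarrow> ts - h \<in> {0..} \<Longrightarrow> h < d \<Longrightarrow> z k (ts - h) < z k ts"
    using has_real_derivative_pos_inc_left by blast
  define h where "h = min d ts / 2"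
  have "h > 0" "h < d" "ts - h \<ge> 0" using d \<open>ts > 0\<close> by (auto simp: h_def)
  then have "z k (ts - h) < 0" using d(2)[of h] \<open>z k ts = 0\<close> by auto
  moreover have "z k (ts - h) > 0" using before[OF k(1)] \<open>ts - h \<ge> 0\<close> \<open>h > 0\<close> by (simp add: ts_def)
  ultimately show False by simp
qed

lemma forward_solution_nonneg:
  fixes Q :: "nat \<Rightarrow> nat \<Rightarrow> real" and p :: "nat \<Rightarrow> real \<Rightarrow> real"
  assumes deriv: "\<And>j t. j \<le> n \<Longrightarrow> t \<ge> 0 \<Longrightarrow>
                    (p j has_real_derivative (\<Sum>i\<le>n. p i t * Q i j)) (at t within {0..})"
    and offdiag: "\<And>i j. i \<le> n \<Longrightarrow> j \<le> n \<Longrightarrow> i \<noteq> j \<Longrightarrow> Q i j \<ge> 0"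
    and init: "\<And>j. j \<le> n \<Longrightarrow> p j 0 \<ge> 0"
    and "j \<le> n" "t \<ge> 0"
  shows "p j t \<ge> 0"
proof (rule ccontr)
  assume neg: "\<not> p j t \<ge> 0"
  define K where "K = 1 + (\<Sum>j\<le>n. \<Sum>i\<le>n. \<bar>Q i j\<bar>)"
  have K: "(\<Sum>i\<le>n. Q i j) < K" if "j \<le> n" for j
  proof -
    have "(\<Sum>i\<le>n. Q i j) \<le> (\<Sum>i\<le>n. \<bar>Q i j\<bar>)" by (intro sum_mono) auto
    also have "\<dots> \<le> (\<Sum>j\<le>n. \<Sum>i\<le>n. \<bar>Q i j\<bar>)"
      by (rule member_le_sum) (use that in \<open>auto intro: sum_nonneg\<close>)
    finally show ?thesis unfolding K_def by simp
  qed
  define \<delta> where "\<delta> = - p j t / (2 * exp (K * t))"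
  have "\<delta> > 0" using neg by (simp add: \<delta>_def divide_neg_pos)
  \<comment> \<open>Since \<open>K\<close> exceeds every column sum of \<open>Q\<close>, adding \<open>\<delta> e\<^sup>K\<^sup>t\<close> makes the derivative of a
    component strictly positive whenever that component touches zero while the others are \<open>\<ge> 0\<close>.\<close>
  have "p j t + \<delta> * exp (K * t) > 0"
  proof (rule positive_on_Ici_if_barrier[where z = "\<lambda>j t. p j t + \<delta> * exp (K * t)" and I = "{..n}"])
    fix i assume "i \<in> {..n}"
    then show "continuous_on {0..} (\<lambda>t. p i t + \<delta> * exp (K * t))"
      by (intro continuous_intros DERIV_continuous_on[OF deriv]) auto
    show "p i 0 + \<delta> * exp (K * 0) > 0" using init[of i] \<open>i \<in> {..n}\<close> \<open>\<delta> > 0\<close> by simp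
  next
    fix k s assume k: "k \<in> {..n}" and s: "s > 0" and zero: "p k s + \<delta> * exp (K * s) = 0"
      and above: "\<forall>i\<in>{..n}. p i s + \<delta> * exp (K * s) \<ge> 0"
    let ?c = "\<delta> * exp (K * s)"
    let ?D = "(\<Sum>i\<le>n. p i s * Q i k) + ?c * K"
    have "(\<Sum>i\<le>n. p i s * Q i k) = (\<Sum>i\<le>n. (p i s + ?c) * Q i k - ?c * Q i k)"
      by (simp add: algebra_simps)
    then have "(\<Sum>i\<le>n. p i s * Q i k) = (\<Sum>i\<le>n. (p i s + ?c) * Q i k) - ?c * (\<Sum>i\<le>n. Q i k)"
      by (simp add: sum_subtractf sum_distrib_left)
    moreover have "(\<Sum>i\<le>n. (p i s + ?c) * Q i k) \<ge> 0"
      using above zero offdiag k by (intro sum_nonneg) (metis atMost_iff mult_eq_0_iff mult_nonneg_nonneg)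
    moreover have "?c * (\<Sum>i\<le>n. Q i k) < ?c * K"
      using K[of k] k \<open>\<delta> > 0\<close> by simp
    ultimately have "?D > 0" by (simp add: algebra_simps)
    moreover have "((\<lambda>t. p k t + \<delta> * exp (K * t)) has_real_derivative ?D) (at s within {0..})"
      using k s by (intro DERIV_add deriv) (auto intro!: derivative_eq_intros)
    ultimately show "\<exists>D>0. ((\<lambda>t. p k t + \<delta> * exp (K * t)) has_real_derivative D) (at s within {0..})"
      by blast
  qed (use assms in auto)
  then show False using neg by (simp add: \<delta>_def)
qed

lemma forward_weighted_sum_deriv:
  fixes Q :: "nat \<Rightarrow> nat \<Rightarrow> real" and p :: "nat \<Rightarrow> real \<Rightarrow> real" and h :: "nat \<Rightarrow> real"
  assumes deriv: "\<And>j. j \<le> n \<Longrightarrow> (p j has_real_derivative (\<Sum>i\<le>n. p i t * Q i j)) (at t within S)"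
  shows "((\<lambda>t. \<Sum>j\<le>n. h j * p j t) has_real_derivative (\<Sum>i\<le>n. p i t * (\<Sum>j\<le>n. Q i j * h j)))
           (at t within S)"
proof -
  have "((\<lambda>t. \<Sum>j\<le>n. h j * p j t) has_real_derivative (\<Sum>j\<le>n. h j * (\<Sum>i\<le>n. p i t * Q i j)))
          (at t within S)"
    by (intro DERIV_sum DERIV_cmult deriv) auto
  also have "(\<Sum>j\<le>n. h j * (\<Sum>i\<le>n. p i t * Q i j)) = (\<Sum>i\<le>n. p i t * (\<Sum>j\<le>n. Q i j * h j))"
    unfolding sum_distrib_left by (subst sum.swap) (simp add: mult_ac)
  finally show ?thesis .
qed

lemma gen_sum_mult:
  fixes h :: "nat \<Rightarrow> real"
  assumes "i \<le> n" "n \<ge> 1"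
  shows "(\<Sum>j\<le>n. gen lam mu n i j * h j) =
     (if i < n then lam * (h (i + 1) - h i) else 0) + (if 1 \<le> i \<and> i < n then mu * (h (i - 1) - h i) else 0)"
proof (cases "i < n")
  case False
  then have "gen lam mu n i j = 0" for j using assms unfolding gen_def by auto
  then show ?thesis using False by simp
next
  case True
  have "gen lam mu n i j * h j = (if j = i + 1 then lam * h j else 0) + (if j = i - 1 \<and> 1 \<le> i then mu * h j else 0)
      + (if j = i then - (lam + (if 1 \<le> i then mu else 0)) * h j else 0)" if "j \<le> n" for j
    using True that assms by (auto simp: gen_def)
  then have "(\<Sum>j\<le>n. gen lam mu n i j * h j) = (\<Sum>j\<le>n. if j = i + 1 then lam * h j else 0)
      + (\<Sum>j\<le>n. if j = i - 1 \<and> 1 \<le> i then mu * h j else 0)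
      + (\<Sum>j\<le>n. if j = i then - (lam + (if 1 \<le> i then mu else 0)) * h j else 0)"
    by (simp add: sum.distrib)
  also have "\<dots> = lam * h (i + 1) + (if 1 \<le> i then mu * h (i - 1) else 0) - (lam + (if 1 \<le> i then mu else 0)) * h i"
    using True by (simp add: sum.If_cases algebra_simps)
  finally show ?thesis using True by (cases "1 \<le> i") (simp_all add: algebra_simps)
qed

lemma gen_nonneg_offdiag: "i \<noteq> j \<Longrightarrow> lam > 0 \<Longrightarrow> mu > 0 \<Longrightarrow> gen lam mu n i j \<ge> 0"
  unfolding gen_def by auto

lemma gen_absorbing_column: "i \<le> n \<Longrightarrow> n \<ge> 2 \<Longrightarrow> gen lam mu n i n = (if i = n - 1 then lam else 0)"
  unfolding gen_def by auto

text \<open>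
  \<open>passage_time lam mu k\<close> is the mean time the chain needs to get from \<open>k\<close> to \<open>k + 1\<close>, and
  \<open>absorption_time lam mu n j\<close> the mean time to get from \<open>j\<close> to \<open>n\<close>.
\<close>

definition passage_time :: "real \<Rightarrow> real \<Rightarrow> nat \<Rightarrow> real" where
  "passage_time lam mu k = (\<Sum>i\<le>k. mu ^ i / lam ^ (i + 1))"

definition absorption_time :: "real \<Rightarrow> real \<Rightarrow> nat \<Rightarrow> nat \<Rightarrow> real" where
  "absorption_time lam mu n j = (\<Sum>k\<in>{j..<n}. passage_time lam mu k)"

lemma passage_time_0: "passage_time lam mu 0 = 1 / lam"
  by (simp add: passage_time_def)

lemma passage_time_Suc: "lam > 0 \<Longrightarrow> lam * passage_time lam mu (Suc k) = 1 + mu * passage_time lam mu k"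
proof -
  assume "lam > 0"
  have "passage_time lam mu (Suc k) = 1 / lam + (\<Sum>i\<le>k. mu ^ Suc i / lam ^ (Suc i + 1))"
    unfolding passage_time_def by (subst sum.atMost_Suc_shift) simp
  also have "(\<Sum>i\<le>k. mu ^ Suc i / lam ^ (Suc i + 1)) = (mu / lam) * passage_time lam mu k"
    unfolding passage_time_def sum_distrib_left using \<open>lam > 0\<close> by (intro sum.cong) (simp_all add: field_simps)
  finally show ?thesis using \<open>lam > 0\<close> by (simp add: field_simps)
qed

lemma passage_time_pos: "lam > 0 \<Longrightarrow> mu > 0 \<Longrightarrow> passage_time lam mu k > 0"
  unfolding passage_time_def by (intro sum_pos) auto

lemma absorption_time_Suc:
  "j < n \<Longrightarrow> absorption_time lam mu n j = passage_time lam mu j + absorption_time lam mu n (Suc j)"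
  unfolding absorption_time_def by (simp add: sum.atLeast_Suc_lessThan)

lemma absorption_time_absorbing: "absorption_time lam mu n n = 0"
  by (simp add: absorption_time_def)

lemma absorption_time_le_0:
  "lam > 0 \<Longrightarrow> mu > 0 \<Longrightarrow> absorption_time lam mu n j \<le> absorption_time lam mu n 0"
  unfolding absorption_time_def using passage_time_pos
  by (intro sum_mono2) (auto intro: less_imp_le)

lemma passage_time_le_absorption_time:
  "j < n \<Longrightarrow> lam > 0 \<Longrightarrow> mu > 0 \<Longrightarrow> passage_time lam mu (n - 1) \<le> absorption_time lam mu n j"
  unfolding absorption_time_def by (rule member_le_sum) (auto intro: less_imp_le passage_time_pos)

lemma absorption_time_pos: "j < n \<Longrightarrow> lam > 0 \<Longrightarrow> mu > 0 \<Longrightarrow> absorption_time lam mu n j > 0"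
  using passage_time_le_absorption_time passage_time_pos by (metis order_less_le_trans)

lemma gen_mult_absorption_time:
  assumes "lam > 0" "i < n"
  shows "(\<Sum>j\<le>n. gen lam mu n i j * absorption_time lam mu n j) = -1"
proof (cases i)
  case 0
  then show ?thesis
    using assms absorption_time_Suc[of 0 n lam mu] by (simp add: gen_sum_mult passage_time_0)
next
  case (Suc k)
  have "(\<Sum>j\<le>n. gen lam mu n i j * absorption_time lam mu n j) =
      lam * (absorption_time lam mu n (Suc i) - absorption_time lam mu n i)
      + mu * (absorption_time lam mu n k - absorption_time lam mu n i)"
    using assms Suc by (simp add: gen_sum_mult)
  then show ?thesis
    using assms Suc absorption_time_Suc[of k n lam mu] absorption_time_Suc[of i n lam mu]
      passage_time_Suc[of lam mu k]
    by (simp add: algebra_simps)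
qed

definition scaled_absorption_time :: "real \<Rightarrow> real \<Rightarrow> nat \<Rightarrow> real" where
  "scaled_absorption_time lam mu n = (lam / mu) ^ (n - 1) * absorption_time lam mu n 0"

definition scaled_last_passage_time :: "real \<Rightarrow> real \<Rightarrow> nat \<Rightarrow> real" where
  "scaled_last_passage_time lam mu n = (lam / mu) ^ (n - 1) * passage_time lam mu (n - 1)"

lemma scaled_passage_time_eq:
  assumes "k \<le> n - 1" "mu > 0" "lam > 0"
  shows "(lam / mu) ^ (n - 1) * passage_time lam mu k = (\<Sum>i\<le>k. (lam / mu) ^ (n - 1 - i) / lam)"
  unfolding passage_time_def sum_distrib_left
proof (intro sum.cong refl)
  fix i assume "i \<in> {..k}"
  then have "n - 1 = (n - 1 - i) + i" using assms by auto
  then have "(lam / mu) ^ (n - 1) = (lam / mu) ^ (n - 1 - i) * (lam / mu) ^ i"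
    by (metis power_add)
  then show "(lam / mu) ^ (n - 1) * (mu ^ i / lam ^ (i + 1)) = (lam / mu) ^ (n - 1 - i) / lam"
    using assms by (simp add: field_simps)
qed

lemma scaled_passage_time_tendsto:
  assumes "k \<le> n - 1" "lam > 0"
  shows "((\<lambda>mu. (lam / mu) ^ (n - 1) * passage_time lam mu k) \<longlongrightarrow> (if k = n - 1 then 1 / lam else 0)) at_top"
proof -
  have "((\<lambda>mu::real. lam / mu) \<longlongrightarrow> 0) at_top"
    by (intro tendsto_divide_0[OF tendsto_const] filterlim_at_top_imp_at_infinity filterlim_ident)
  then have "((\<lambda>mu. \<Sum>i\<le>k. (lam / mu) ^ (n - 1 - i) / lam) \<longlongrightarrow> (\<Sum>i\<le>k. 0 ^ (n - 1 - i) / lam)) at_top"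
    by (intro tendsto_intros) (use assms in auto)
  also have "(\<Sum>i\<le>k. (0::real) ^ (n - 1 - i) / lam) = (\<Sum>i\<le>k. if i = n - 1 then 1 / lam else 0)"
    using assms(1) by (intro sum.cong) auto
  also have "\<dots> = (if k = n - 1 then 1 / lam else 0)"
    using assms(1) by auto
  finally show ?thesis
    by (rule Lim_transform_eventually)
       (use eventually_gt_at_top[of 0] in \<open>eventually_elim, use scaled_passage_time_eq assms in auto\<close>)
qed

lemma scaled_absorption_time_tendsto:
  assumes "lam > 0" "n \<ge> 1"
  shows "((\<lambda>mu. scaled_absorption_time lam mu n) \<longlongrightarrow> 1 / lam) at_top"
proof -
  have "((\<lambda>mu. \<Sum>k<n. (lam / mu) ^ (n - 1) * passage_time lam mu k) \<longlongrightarrow>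
          (\<Sum>k<n. if k = n - 1 then 1 / lam else 0)) at_top"
    by (intro tendsto_sum scaled_passage_time_tendsto assms) auto
  then show ?thesis
    using assms
    by (simp add: scaled_absorption_time_def absorption_time_def sum_distrib_left atLeast0LessThan)
qed

lemma scaled_last_passage_time_tendsto:
  "lam > 0 \<Longrightarrow> ((\<lambda>mu. scaled_last_passage_time lam mu n) \<longlongrightarrow> 1 / lam) at_top"
  using scaled_passage_time_tendsto[of "n - 1" n lam] by (simp add: scaled_last_passage_time_def)

lemma Lyapunov_exp_bounds:
  fixes F u :: "real \<Rightarrow> real" and a b :: real
  assumes deriv: "\<And>t. t \<ge> 0 \<Longrightarrow> (F has_real_derivative - u t) (at t within {0..})"
    and sandwich: "\<And>t. t \<ge> 0 \<Longrightarrow> b * u t \<le> F t \<and> F t \<le> a * u t"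
    and F0: "F 0 = a" and "0 < b" "0 < a" "t \<ge> 0"
  shows "exp (- t / b) \<le> u t \<and> u t \<le> a / b * exp (- t / a)"
proof -
  have weighted_deriv: "((\<lambda>t. exp (t / c) * F t) has_real_derivative exp (x / c) * (F x / c - u x))
      (at x within {0..})" if "c \<noteq> 0" "x \<ge> 0" for c x
    using that by (auto intro!: derivative_eq_intros deriv simp: algebra_simps)
  have "- (exp (0 / a) * F 0) \<le> - (exp (t / a) * F t)"
  proof (rule mono_on_Ici_if_deriv_nonneg[where g = "\<lambda>t. - (exp (t / a) * F t)"])
    fix x :: real assume "x \<ge> 0"
    show "((\<lambda>t. - (exp (t / a) * F t)) has_real_derivative - (exp (x / a) * (F x / a - u x))) (at x within {0..})"
      using weighted_deriv[of a x] \<open>x \<ge> 0\<close> \<open>0 < a\<close> by (auto intro: DERIV_minus)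
    show "0 \<le> - (exp (x / a) * (F x / a - u x))"
      using sandwich[OF \<open>x \<ge> 0\<close>] \<open>0 < a\<close> by (simp add: mult_le_0_iff field_simps)
  qed (use \<open>t \<ge> 0\<close> in auto)
  then have upper: "F t \<le> a * exp (- t / a)" by (simp add: F0 exp_minus field_simps)
  have "exp (0 / b) * F 0 \<le> exp (t / b) * F t"
  proof (rule mono_on_Ici_if_deriv_nonneg[where g = "\<lambda>t. exp (t / b) * F t"])
    fix x :: real assume "x \<ge> 0"
    show "((\<lambda>t. exp (t / b) * F t) has_real_derivative exp (x / b) * (F x / b - u x)) (at x within {0..})"
      using weighted_deriv[of b x] \<open>x \<ge> 0\<close> \<open>0 < b\<close> by simp
    show "0 \<le> exp (x / b) * (F x / b - u x)"
      using sandwich[OF \<open>x \<ge> 0\<close>] \<open>0 < b\<close> by (simp add: field_simps)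
  qed (use \<open>t \<ge> 0\<close> in auto)
  then have lower: "a * exp (- t / b) \<le> F t" by (simp add: F0 exp_minus field_simps)
  have "a * exp (- t / b) \<le> a * u t" "b * u t \<le> a * exp (- t / a)"
    using upper lower sandwich[OF \<open>t \<ge> 0\<close>] by linarith+
  then show ?thesis using \<open>0 < a\<close> \<open>0 < b\<close> by (simp add: field_simps)
qed

lemma laplace_cmult: "laplace (\<lambda>t. c * f t) s = c * laplace f s"
  unfolding laplace_def by (simp add: mult.left_commute)

context
  fixes u g :: "real \<Rightarrow> real" and a b :: real
  assumes survival_deriv: "\<And>t. t \<ge> 0 \<Longrightarrow> (u has_real_derivative - g t) (at t within {0..})"
    and density_cont: "continuous_on {0..} g"
    and density_nonneg: "\<And>t. t \<ge> 0 \<Longrightarrow> 0 \<le> g t"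
    and survival_0: "u 0 = 1"
    and survival_bounds: "\<And>t. t \<ge> 0 \<Longrightarrow> exp (- t / b) \<le> u t \<and> u t \<le> a / b * exp (- t / a)"
    and time_consts_pos: "0 < a" "0 < b"
begin

lemma survival_nonneg: "t \<ge> 0 \<Longrightarrow> 0 \<le> u t"
  using survival_bounds[of t] by (meson exp_ge_zero order_trans)

lemma survival_discounted_le: "\<sigma> \<ge> 0 \<Longrightarrow> t \<ge> 0 \<Longrightarrow> exp (- \<sigma> * t) * u t \<le> a / b * exp (- (1 / a) * t)"
  using mult_right_mono[of "exp (- \<sigma> * t)" 1 "u t"] survival_nonneg[of t] survival_bounds[of t] by simp

lemma survival_discounted_tendsto_0: "\<sigma> \<ge> 0 \<Longrightarrow> ((\<lambda>t. exp (- \<sigma> * t) * u t) \<longlongrightarrow> 0) at_top"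
proof (rule tendsto_sandwich[where f = "\<lambda>t. 0" and h = "\<lambda>t. a / b * exp (- (1 / a) * t)"])
  show "((\<lambda>t. a / b * exp (- (1 / a) * t)) \<longlongrightarrow> 0) at_top"
    using time_consts_pos by (intro tendsto_mult_right_zero tendsto_exp_neg_mult_at_top) simp
  assume "\<sigma> \<ge> 0"
  show "\<forall>\<^sub>F t in at_top. 0 \<le> exp (- \<sigma> * t) * u t"
    using eventually_ge_at_top[of 0] by eventually_elim (simp add: survival_nonneg)
  show "\<forall>\<^sub>F t in at_top. exp (- \<sigma> * t) * u t \<le> a / b * exp (- (1 / a) * t)"
    using eventually_ge_at_top[of 0] by eventually_elim (rule survival_discounted_le[OF \<open>\<sigma> \<ge> 0\<close>])
qed simp

lemma laplace_survival_integrable: "\<sigma> \<ge> 0 \<Longrightarrow> set_integrable lborel {0..} (\<lambda>t. exp (- \<sigma> * t) * u t)"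
proof (rule set_integrable_bound[where f = "\<lambda>t. a / b * exp (- (1 / a) * t)"])
  show "set_integrable lborel {0..} (\<lambda>t. a / b * exp (- (1 / a) * t))"
    using exp_neg_mult_integral_Ici[of "1 / a"] time_consts_pos by simp
  show "set_borel_measurable lborel {0..} (\<lambda>t. exp (- \<sigma> * t) * u t)"
    by (intro set_borel_measurable_continuous_on_Ici continuous_intros DERIV_continuous_on[OF survival_deriv]) auto
qed (use survival_nonneg survival_discounted_le time_consts_pos in auto)

lemma laplace_density_survival:
  assumes "\<sigma> \<ge> 0"
  shows "laplace g \<sigma> + \<sigma> * laplace u \<sigma> = 1"
proof -
  define f where "f t = exp (- \<sigma> * t) * g t + \<sigma> * (exp (- \<sigma> * t) * u t)" for t
  have "set_integrable lborel {0..} f \<and> (LINT t:{0..}|lborel. f t) = 0 - (- (exp (- \<sigma> * 0) * u 0))"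
  proof (rule set_integral_Ici_FTC_nonneg[where F = "\<lambda>t. - (exp (- \<sigma> * t) * u t)"])
    show "((\<lambda>t. - (exp (- \<sigma> * t) * u t)) \<longlongrightarrow> 0) at_top"
      using tendsto_minus[OF survival_discounted_tendsto_0[OF assms]] by simp
    show "continuous_on {0..} f"
      unfolding f_def by (intro continuous_intros density_cont DERIV_continuous_on[OF survival_deriv]) auto
    fix t :: real assume "t \<ge> 0"
    then show "((\<lambda>t. - (exp (- \<sigma> * t) * u t)) has_real_derivative f t) (at t within {0..})"
      unfolding f_def by (auto intro!: derivative_eq_intros survival_deriv simp: algebra_simps)
    show "0 \<le> f t"
      unfolding f_def using \<open>t \<ge> 0\<close> assms density_nonneg survival_nonneg by simp
  qed simp
  then have f_integrable: "set_integrable lborel {0..} f" and f_integral: "(LINT t:{0..}|lborel. f t) = 1"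
    using survival_0 by simp_all
  have "set_integrable lborel {0..} (\<lambda>t. exp (- \<sigma> * t) * g t)"
  proof (rule set_integrable_bound[OF f_integrable])
    show "set_borel_measurable lborel {0..} (\<lambda>t. exp (- \<sigma> * t) * g t)"
      by (intro set_borel_measurable_continuous_on_Ici continuous_intros density_cont)
  qed (use assms density_nonneg survival_nonneg in \<open>auto simp: f_def\<close>)
  then have "(LINT t:{0..}|lborel. f t) = laplace g \<sigma> + \<sigma> * laplace u \<sigma>"
    unfolding f_def laplace_def using laplace_survival_integrable[OF assms] by simp
  then show ?thesis using f_integral by simp
qed

lemma laplace_survival_bounds:
  assumes "\<sigma> \<ge> 0"
  shows "\<sigma> / (\<sigma> + 1 / b) \<le> \<sigma> * laplace u \<sigma> \<and> \<sigma> * laplace u \<sigma> \<le> a / b * (\<sigma> / (\<sigma> + 1 / a))"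
proof -
  have pos: "\<sigma> + 1 / b > 0" "\<sigma> + 1 / a > 0" using assms time_consts_pos by (simp_all add: add_nonneg_pos)
  note exp_b = exp_neg_mult_integral_Ici[OF pos(1)] and exp_a = exp_neg_mult_integral_Ici[OF pos(2)]
  note u_integrable = laplace_survival_integrable[OF assms]
  have "1 / (\<sigma> + 1 / b) = (LINT t:{0..}|lborel. exp (- (\<sigma> + 1 / b) * t))" using exp_b by simp
  also have "\<dots> \<le> laplace u \<sigma>" unfolding laplace_def
  proof (rule set_integral_mono[OF conjunct1[OF exp_b] u_integrable])
    fix t :: real assume "t \<in> {0..}"
    then have "exp (- \<sigma> * t) * exp (- t / b) \<le> exp (- \<sigma> * t) * u t"
      using survival_bounds[of t] by (intro mult_left_mono) auto
    then show "exp (- (\<sigma> + 1 / b) * t) \<le> exp (- \<sigma> * t) * u t"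
      by (simp add: exp_add[symmetric] algebra_simps)
  qed
  finally have lower: "1 / (\<sigma> + 1 / b) \<le> laplace u \<sigma>" .
  have "laplace u \<sigma> \<le> (LINT t:{0..}|lborel. a / b * exp (- (\<sigma> + 1 / a) * t))" unfolding laplace_def
  proof (rule set_integral_mono[OF u_integrable])
    show "set_integrable lborel {0..} (\<lambda>t. a / b * exp (- (\<sigma> + 1 / a) * t))" using exp_a by simp
    fix t :: real assume "t \<in> {0..}"
    then have "exp (- \<sigma> * t) * u t \<le> exp (- \<sigma> * t) * (a / b * exp (- t / a))"
      using survival_bounds[of t] by (intro mult_left_mono) auto
    then show "exp (- \<sigma> * t) * u t \<le> a / b * exp (- (\<sigma> + 1 / a) * t)"
      by (simp add: exp_add[symmetric] algebra_simps)
  qed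
  also have "\<dots> = a / b * (1 / (\<sigma> + 1 / a))" using exp_a by simp
  finally have upper: "laplace u \<sigma> \<le> a / b * (1 / (\<sigma> + 1 / a))" .
  show ?thesis
    using mult_left_mono[OF lower assms] mult_left_mono[OF upper assms] by (simp add: ac_simps)
qed

lemma laplace_density_bounds:
  "\<sigma> \<ge> 0 \<Longrightarrow> 1 - a / b * (\<sigma> / (\<sigma> + 1 / a)) \<le> laplace g \<sigma> \<and> laplace g \<sigma> \<le> 1 - \<sigma> / (\<sigma> + 1 / b)"
  using laplace_density_survival laplace_survival_bounds by fastforce

end

definition extend_by_zero :: "(real \<Rightarrow> real) \<Rightarrow> real \<Rightarrow> real" where
  "extend_by_zero P = (\<lambda>t. if t < 0 then 0 else P t)"

context
  fixes P g :: "real \<Rightarrow> real"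
  assumes cdf_deriv: "\<And>t. t \<ge> 0 \<Longrightarrow> (P has_real_derivative g t) (at t within {0..})"
    and density_cont: "continuous_on {0..} g"
    and density_nonneg: "\<And>t. t \<ge> 0 \<Longrightarrow> 0 \<le> g t"
    and cdf_0: "P 0 = 0"
    and cdf_tendsto_1: "(P \<longlongrightarrow> 1) at_top"
begin

lemma extend_by_zero_mono: "x \<le> y \<Longrightarrow> extend_by_zero P x \<le> extend_by_zero P y"
proof -
  have P_mono: "P x \<le> P y" if "0 \<le> x" "x \<le> y" for x y
    by (rule mono_on_Ici_if_deriv_nonneg[where g = P and g' = g]) (use cdf_deriv density_nonneg that in auto)
  then show "x \<le> y \<Longrightarrow> extend_by_zero P x \<le> extend_by_zero P y"
    using P_mono[of 0 y] cdf_0 by (auto simp: extend_by_zero_def)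
qed

lemma extend_by_zero_continuous_right: "continuous (at_right x) (extend_by_zero P)"
proof (cases "x < 0")
  case True
  then have "eventually (\<lambda>y. extend_by_zero P y = 0) (at_right x)"
    using eventually_at_right[of x 0] by (auto simp: extend_by_zero_def elim!: eventually_mono)
  then show ?thesis
    unfolding continuous_within using True by (simp add: extend_by_zero_def tendsto_eventually)
next
  case False
  have "continuous (at x within {0..}) P" using cdf_deriv[of x] False by (auto intro: DERIV_continuous)
  then have "(P \<longlongrightarrow> P x) (at_right x)"
    unfolding continuous_within by (rule tendsto_within_subset) (use False in auto)
  moreover have "eventually (\<lambda>y. P y = extend_by_zero P y) (at_right x)"
    using eventually_at_right_less[of x] False by (auto simp: extend_by_zero_def elim!: eventually_mono)
  ultimately have "(extend_by_zero P \<longlongrightarrow> P x) (at_right x)" by (rule Lim_transform_eventually)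
  then show ?thesis using False unfolding continuous_within by (simp add: extend_by_zero_def)
qed

lemma extend_by_zero_tendsto_1: "(extend_by_zero P \<longlongrightarrow> 1) at_top"
  by (rule Lim_transform_eventually[OF cdf_tendsto_1])
     (auto simp: extend_by_zero_def intro: eventually_mono[OF eventually_ge_at_top[of 0]])

lemma emeasure_interval_measure_Ioi:
  "emeasure (interval_measure (extend_by_zero P)) {x<..} = ennreal (1 - extend_by_zero P x)"
proof -
  let ?M = "interval_measure (extend_by_zero P)"
  have "(\<lambda>k. emeasure ?M {x<..x + real k}) \<longlonglongrightarrow> emeasure ?M (\<Union>k. {x<..x + real k})"
    by (rule Lim_emeasure_incseq) (auto simp: incseq_def)
  moreover have "(\<Union>k. {x<..x + real k}) = {x<..}"
    by auto (metis add.commute diff_less_eq less_le_not_le reals_Archimedean2)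
  moreover have "(\<lambda>k. emeasure ?M {x<..x + real k}) \<longlonglongrightarrow> ennreal (1 - extend_by_zero P x)"
  proof -
    have "emeasure ?M {x<..x + real k} = ennreal (extend_by_zero P (x + real k) - extend_by_zero P x)" for k
      by (rule emeasure_interval_measure_Ioc) (auto intro: extend_by_zero_mono extend_by_zero_continuous_right)
    moreover have "filterlim (\<lambda>k::nat. x + real k) at_top sequentially"
      by (rule filterlim_tendsto_add_at_top[OF tendsto_const filterlim_real_sequentially])
    then have "(\<lambda>k. extend_by_zero P (x + real k) - extend_by_zero P x) \<longlonglongrightarrow> 1 - extend_by_zero P x"
      by (intro tendsto_intros filterlim_compose[OF extend_by_zero_tendsto_1])
    ultimately show ?thesis by simp
  qed
  ultimately show ?thesis using LIMSEQ_unique by simp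
qed

lemma density_measurable: "(\<lambda>t. indicator {0..} t * g t) \<in> borel_measurable borel"
  using set_borel_measurable_continuous_on_Ici[OF density_cont] by (simp add: set_borel_measurable_def)

lemma emeasure_density_Ioi:
  "emeasure (density lborel (\<lambda>t. indicator {0..} t * g t)) {x<..} = ennreal (1 - extend_by_zero P x)"
proof -
  define y where "y = max x 0"
  have FTC: "set_integrable lborel {y..} g \<and> (LINT t:{y..}|lborel. g t) = 1 - P y"
    using cdf_deriv density_cont density_nonneg cdf_tendsto_1
    by (rule set_integral_Ici_FTC_nonneg) (auto simp: y_def)
  have "emeasure (density lborel (\<lambda>t. indicator {0..} t * g t)) {x<..} =
      (\<integral>\<^sup>+ t. ennreal (indicator {0..} t * g t) * indicator {x<..} t \<partial>lborel)"
    using density_measurable by (intro emeasure_density) auto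
  also have "\<dots> = (\<integral>\<^sup>+ t. ennreal (indicator {y..} t *\<^sub>R g t) \<partial>lborel)"
    using AE_lborel_singleton[of x]
    by (intro nn_integral_cong_AE) (auto elim!: eventually_mono simp: y_def indicator_def)
  also have "\<dots> = ennreal (LINT t:{y..}|lborel. g t)"
    using FTC density_nonneg unfolding set_integrable_def set_lebesgue_integral_def
    by (intro nn_integral_eq_integral) (auto simp: y_def indicator_def)
  also have "\<dots> = ennreal (1 - extend_by_zero P x)"
    using FTC cdf_0 by (auto simp: y_def extend_by_zero_def max_def)
  finally show ?thesis .
qed

lemma interval_measure_eq_density:
  "interval_measure (extend_by_zero P) = density lborel (\<lambda>t. indicator {0..} t * g t)"
  by (rule measure_eqI_lessThan) (simp_all add: emeasure_interval_measure_Ioi emeasure_density_Ioi)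

lemma lst_eq_laplace: "lst (extend_by_zero P) \<sigma> = laplace g \<sigma>"
proof -
  have "lst (extend_by_zero P) \<sigma> = (\<integral>t. (indicator {0..} t * g t) *\<^sub>R exp (- \<sigma> * t) \<partial>lborel)"
    unfolding lst_def interval_measure_eq_density
    using density_measurable density_nonneg by (intro integral_density) (auto simp: indicator_def)
  also have "\<dots> = laplace g \<sigma>"
    unfolding laplace_def set_lebesgue_integral_def by (simp add: indicator_def mult_ac)
  finally show ?thesis .
qed

end

context
  fixes lam mu :: real and n :: nat and p :: "nat \<Rightarrow> real \<Rightarrow> real"
  assumes lam: "lam > 0" and mu: "mu > 0" and n: "n \<ge> 2" and forward: "forward_dist lam mu n p"
begin

lemma forward_deriv:
  "j \<le> n \<Longrightarrow> t \<ge> 0 \<Longrightarrow> (p j has_real_derivative (\<Sum>i\<le>n. p i t * gen lam mu n i j)) (at t within {0..})"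
  using forward unfolding forward_dist_def by auto

lemma forward_init: "j \<le> n \<Longrightarrow> p j 0 = (if j = 0 then 1 else 0)"
  using forward unfolding forward_dist_def by auto

lemma forward_continuous: "j \<le> n \<Longrightarrow> continuous_on {0..} (p j)"
  by (rule DERIV_continuous_on[OF forward_deriv]) auto

lemma forward_nonneg: "j \<le> n \<Longrightarrow> t \<ge> 0 \<Longrightarrow> 0 \<le> p j t"
  by (rule forward_solution_nonneg[OF forward_deriv]) (use lam mu forward_init gen_nonneg_offdiag in auto)

lemma forward_sum_eq_1: "t \<ge> 0 \<Longrightarrow> (\<Sum>j\<le>n. p j t) = 1"
proof -
  have row_sum: "(\<Sum>j\<le>n. gen lam mu n i j) = 0" if "i \<le> n" for i
    using gen_sum_mult[OF that, where h = "\<lambda>_. 1"] n by simp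
  have "((\<lambda>t. \<Sum>j\<le>n. 1 * p j t) has_real_derivative 0) (at t within {0..})" if "t \<in> {0..}" for t
    using forward_weighted_sum_deriv[OF forward_deriv, of t "\<lambda>_. 1"] that by (simp add: row_sum)
  then obtain c where "\<forall>t\<in>{0..}. (\<Sum>j\<le>n. 1 * p j t) = c"
    using has_field_derivative_zero_constant[of "{0..}"] by blast
  moreover have "(\<Sum>j\<le>n. p j 0) = 1" by (simp add: forward_init)
  ultimately show "t \<ge> 0 \<Longrightarrow> (\<Sum>j\<le>n. p j t) = 1" by force
qed

lemma absorbed_deriv: "t \<ge> 0 \<Longrightarrow> (p n has_real_derivative lam * p (n - 1) t) (at t within {0..})"
proof -
  have "(\<Sum>i\<le>n. p i t * gen lam mu n i n) = (\<Sum>i\<le>n. if i = n - 1 then lam * p i t else 0)"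
    using n by (intro sum.cong) (auto simp: gen_absorbing_column)
  also have "\<dots> = lam * p (n - 1) t" using n by simp
  finally show "t \<ge> 0 \<Longrightarrow> ?thesis" using forward_deriv[of n t] by simp
qed

lemma forward_survival_eq_sum: "t \<ge> 0 \<Longrightarrow> 1 - p n t = (\<Sum>j<n. p j t)"
  using forward_sum_eq_1[of t] by (simp add: lessThan_Suc_atMost[symmetric])

lemma mean_absorption_time_deriv:
  assumes "t \<ge> 0"
  shows "((\<lambda>t. \<Sum>j\<le>n. absorption_time lam mu n j * p j t) has_real_derivative - (1 - p n t))
           (at t within {0..})"
proof -
  have "(\<Sum>j\<le>n. gen lam mu n i j * absorption_time lam mu n j) = (if i < n then -1 else 0)" if "i \<le> n" for i
  proof (cases "i < n")
    case False
    then show ?thesis using gen_sum_mult[OF that, where h = "absorption_time lam mu n"] n by simp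
  qed (simp add: gen_mult_absorption_time lam)
  then have "(\<Sum>i\<le>n. p i t * (\<Sum>j\<le>n. gen lam mu n i j * absorption_time lam mu n j)) = - (\<Sum>i<n. p i t)"
    by (simp add: lessThan_Suc_atMost[symmetric] sum_negf)
  moreover have "((\<lambda>t. \<Sum>j\<le>n. absorption_time lam mu n j * p j t) has_real_derivative
      (\<Sum>i\<le>n. p i t * (\<Sum>j\<le>n. gen lam mu n i j * absorption_time lam mu n j))) (at t within {0..})"
    using assms by (intro forward_weighted_sum_deriv forward_deriv)
  ultimately show ?thesis using forward_survival_eq_sum[OF assms] by simp
qed

lemma mean_absorption_time_bounds:
  assumes "t \<ge> 0"
  shows "passage_time lam mu (n - 1) * (1 - p n t) \<le> (\<Sum>j\<le>n. absorption_time lam mu n j * p j t) \<and>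
         (\<Sum>j\<le>n. absorption_time lam mu n j * p j t) \<le> absorption_time lam mu n 0 * (1 - p n t)"
proof -
  have sum_eq: "(\<Sum>j\<le>n. absorption_time lam mu n j * p j t) = (\<Sum>j<n. absorption_time lam mu n j * p j t)"
    by (simp add: lessThan_Suc_atMost[symmetric] absorption_time_absorbing)
  have "passage_time lam mu (n - 1) * p j t \<le> absorption_time lam mu n j * p j t"
      "absorption_time lam mu n j * p j t \<le> absorption_time lam mu n 0 * p j t" if "j < n" for j
    using mult_right_mono[OF passage_time_le_absorption_time[OF that lam mu] forward_nonneg[of j t]]
      mult_right_mono[OF absorption_time_le_0[OF lam mu] forward_nonneg[of j t]] that assms
    by auto
  then show ?thesis
    unfolding sum_eq forward_survival_eq_sum[OF assms] sum_distrib_left by (auto intro!: sum_mono)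
qed

lemma forward_survival_exp_bounds:
  "t \<ge> 0 \<Longrightarrow> exp (- t / passage_time lam mu (n - 1)) \<le> 1 - p n t \<and>
     1 - p n t \<le> absorption_time lam mu n 0 / passage_time lam mu (n - 1) * exp (- t / absorption_time lam mu n 0)"
proof (rule Lyapunov_exp_bounds[OF mean_absorption_time_deriv mean_absorption_time_bounds])
  show "(\<Sum>j\<le>n. absorption_time lam mu n j * p j 0) = absorption_time lam mu n 0"
    by (simp add: forward_init if_distrib cong: if_cong)
  show "0 < passage_time lam mu (n - 1)" using lam mu by (rule passage_time_pos)
  show "0 < absorption_time lam mu n 0" using lam mu n by (intro absorption_time_pos) auto
qed

lemma forward_survival_deriv:
  "t \<ge> 0 \<Longrightarrow> ((\<lambda>t. 1 - p n t) has_real_derivative - (lam * p (n - 1) t)) (at t within {0..})"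
  using DERIV_diff[OF DERIV_const absorbed_deriv] by simp

lemma absorption_density_continuous: "continuous_on {0..} (\<lambda>t. lam * p (n - 1) t)"
  by (intro continuous_intros forward_continuous) simp

lemma absorption_density_nonneg: "t \<ge> 0 \<Longrightarrow> 0 \<le> lam * p (n - 1) t"
  using lam forward_nonneg[of "n - 1" t] by simp

lemma absorbed_init: "p n 0 = 0"
  using forward_init[of n] n by simp

lemma absorbed_tendsto_1: "(p n \<longlongrightarrow> 1) at_top"
proof -
  have "((\<lambda>t. exp (- 0 * t) * (1 - p n t)) \<longlongrightarrow> 0) at_top"
    using passage_time_pos[OF lam mu] absorption_time_pos[of 0 n, OF _ lam mu] n
    by (intro survival_discounted_tendsto_0[OF forward_survival_deriv absorption_density_continuous
          absorption_density_nonneg _ forward_survival_exp_bounds]) (auto simp: absorbed_init)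
  then have "((\<lambda>t. 1 - (1 - p n t)) \<longlongrightarrow> 1 - 0) at_top" by (intro tendsto_diff) simp_all
  then show ?thesis by simp
qed

lemma forward_lst_eq: "lst (\<lambda>t. if t < 0 then 0 else p n t) \<sigma> = lam * laplace (p (n - 1)) \<sigma>"
  using lst_eq_laplace[OF absorbed_deriv absorption_density_continuous absorption_density_nonneg
      absorbed_init absorbed_tendsto_1]
  by (simp add: extend_by_zero_def laplace_cmult)

lemma forward_survival_exp_bounds_scaled:
  assumes "t \<ge> 0"
  shows "exp (- t / scaled_last_passage_time lam mu n) \<le> 1 - p n (t / (lam / mu) ^ (n - 1)) \<and>
         1 - p n (t / (lam / mu) ^ (n - 1)) \<le> scaled_absorption_time lam mu n / scaled_last_passage_time lam mu n
           * exp (- t / scaled_absorption_time lam mu n)"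
proof -
  have "(lam / mu) ^ (n - 1) > 0" using lam mu by simp
  then show ?thesis
    using forward_survival_exp_bounds[of "t / (lam / mu) ^ (n - 1)"] assms lam mu
    unfolding scaled_absorption_time_def scaled_last_passage_time_def by simp
qed

lemma forward_laplace_bounds_scaled:
  assumes "s \<ge> 0"
  defines "A \<equiv> scaled_absorption_time lam mu n" and "B \<equiv> scaled_last_passage_time lam mu n"
  shows "1 - A / B * (s / (s + 1 / A)) \<le> lam * laplace (p (n - 1)) ((lam / mu) ^ (n - 1) * s) \<and>
         lam * laplace (p (n - 1)) ((lam / mu) ^ (n - 1) * s) \<le> 1 - s / (s + 1 / B)"
proof -
  define e where "e = (lam / mu) ^ (n - 1)"
  let ?a = "absorption_time lam mu n 0" and ?b = "passage_time lam mu (n - 1)"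
  have pos: "?a > 0" "?b > 0" "e > 0"
    using absorption_time_pos[of 0 n, OF _ lam mu] passage_time_pos[OF lam mu] n lam mu by (auto simp: e_def)
  have "1 - ?a / ?b * (e * s / (e * s + 1 / ?a)) \<le> laplace (\<lambda>t. lam * p (n - 1) t) (e * s) \<and>
        laplace (\<lambda>t. lam * p (n - 1) t) (e * s) \<le> 1 - e * s / (e * s + 1 / ?b)"
    using pos assms(1)
    by (intro laplace_density_bounds[OF forward_survival_deriv absorption_density_continuous
          absorption_density_nonneg _ forward_survival_exp_bounds]) (auto simp: absorbed_init)
  moreover have "A / B * (s / (s + 1 / A)) = ?a / ?b * (e * s / (e * s + 1 / ?a))"
    "s / (s + 1 / B) = e * s / (e * s + 1 / ?b)"
    using pos assms(1) lam mu unfolding A_def B_def scaled_absorption_time_def scaled_last_passage_time_def e_def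
    by (simp_all add: field_simps add_nonneg_pos)
  ultimately show ?thesis unfolding laplace_cmult e_def by simp
qed

end
lemma tendsto_exp_sandwich:
  fixes A B f :: "'a \<Rightarrow> real"
  assumes "(A \<longlongrightarrow> 1 / lam) F" "(B \<longlongrightarrow> 1 / lam) F" "lam \<noteq> 0"
    and "\<forall>\<^sub>F x in F. exp (- t / B x) \<le> f x \<and> f x \<le> A x / B x * exp (- t / A x)"
  shows "(f \<longlongrightarrow> exp (- lam * t)) F"
proof (rule tendsto_sandwich)
  have "((\<lambda>x. exp (- t / B x)) \<longlongrightarrow> exp (- t / (1 / lam))) F" using assms(3) by (intro tendsto_intros assms) simp
  then show "((\<lambda>x. exp (- t / B x)) \<longlongrightarrow> exp (- lam * t)) F" by (simp add: mult.commute)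
  have "((\<lambda>x. A x / B x * exp (- t / A x)) \<longlongrightarrow> (1 / lam) / (1 / lam) * exp (- t / (1 / lam))) F"
    using assms(3) by (intro tendsto_intros assms) simp_all
  then show "((\<lambda>x. A x / B x * exp (- t / A x)) \<longlongrightarrow> exp (- lam * t)) F"
    using assms(3) by (simp add: mult.commute)
qed (rule eventually_mono[OF assms(4)], blast)+

lemma tendsto_laplace_sandwich:
  fixes A B f :: "'a \<Rightarrow> real"
  assumes "(A \<longlongrightarrow> 1 / lam) F" "(B \<longlongrightarrow> 1 / lam) F" "lam > 0" "s \<ge> 0"
    and "\<forall>\<^sub>F x in F. 1 - A x / B x * (s / (s + 1 / A x)) \<le> f x \<and> f x \<le> 1 - s / (s + 1 / B x)"
  shows "(f \<longlongrightarrow> lam / (lam + s)) F"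
proof -
  have "s + lam > 0" using assms(3,4) by simp
  have "(f \<longlongrightarrow> 1 - s / (s + 1 / (1 / lam))) F"
  proof (rule tendsto_sandwich)
    have "((\<lambda>x. 1 - A x / B x * (s / (s + 1 / A x))) \<longlongrightarrow> 1 - (1 / lam) / (1 / lam) * (s / (s + 1 / (1 / lam)))) F"
      using \<open>s + lam > 0\<close> assms(3) by (intro tendsto_intros assms) auto
    then show "((\<lambda>x. 1 - A x / B x * (s / (s + 1 / A x))) \<longlongrightarrow> 1 - s / (s + 1 / (1 / lam))) F"
      using assms(3) by simp
    show "((\<lambda>x. 1 - s / (s + 1 / B x)) \<longlongrightarrow> 1 - s / (s + 1 / (1 / lam))) F"
      using \<open>s + lam > 0\<close> assms(3) by (intro tendsto_intros assms) auto
  qed (rule eventually_mono[OF assms(5)], blast)+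
  moreover have "1 - s / (s + 1 / (1 / lam)) = lam / (lam + s)"
    using \<open>s + lam > 0\<close> by (simp add: field_simps)
  ultimately show ?thesis by (simp only:)
qed

lemma forward_survival_scaled_tendsto:
  fixes p :: "real \<Rightarrow> nat \<Rightarrow> real \<Rightarrow> real"
  assumes n: "n \<ge> 2" and lam: "lam > 0" and forward: "\<And>mu. mu > 0 \<Longrightarrow> forward_dist lam mu n (p mu)"
    and "t \<ge> 0"
  shows "((\<lambda>mu. 1 - p mu n (t / (lam / mu) ^ (n - 1))) \<longlongrightarrow> exp (- lam * t)) at_top"
proof (rule tendsto_exp_sandwich)
  show "((\<lambda>mu. scaled_absorption_time lam mu n) \<longlongrightarrow> 1 / lam) at_top"
    using lam n by (intro scaled_absorption_time_tendsto) auto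
  show "((\<lambda>mu. scaled_last_passage_time lam mu n) \<longlongrightarrow> 1 / lam) at_top"
    using lam by (rule scaled_last_passage_time_tendsto)
  show "\<forall>\<^sub>F mu in at_top. exp (- t / scaled_last_passage_time lam mu n) \<le> 1 - p mu n (t / (lam / mu) ^ (n - 1)) \<and>
      1 - p mu n (t / (lam / mu) ^ (n - 1)) \<le> scaled_absorption_time lam mu n / scaled_last_passage_time lam mu n
        * exp (- t / scaled_absorption_time lam mu n)"
    using eventually_gt_at_top[of 0]
    by eventually_elim (rule forward_survival_exp_bounds_scaled[OF lam _ n forward \<open>t \<ge> 0\<close>])
qed (use lam in simp)

lemma forward_laplace_scaled_tendsto:
  fixes p :: "real \<Rightarrow> nat \<Rightarrow> real \<Rightarrow> real"
  assumes n: "n \<ge> 2" and lam: "lam > 0" and forward: "\<And>mu. mu > 0 \<Longrightarrow> forward_dist lam mu n (p mu)"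
    and "s \<ge> 0"
  shows "((\<lambda>mu. lam * laplace (p mu (n - 1)) ((lam / mu) ^ (n - 1) * s)) \<longlongrightarrow> lam / (lam + s)) at_top"
proof (rule tendsto_laplace_sandwich)
  show "((\<lambda>mu. scaled_absorption_time lam mu n) \<longlongrightarrow> 1 / lam) at_top"
    using lam n by (intro scaled_absorption_time_tendsto) auto
  show "((\<lambda>mu. scaled_last_passage_time lam mu n) \<longlongrightarrow> 1 / lam) at_top"
    using lam by (rule scaled_last_passage_time_tendsto)
  show "\<forall>\<^sub>F mu in at_top.
      1 - scaled_absorption_time lam mu n / scaled_last_passage_time lam mu n
        * (s / (s + 1 / scaled_absorption_time lam mu n)) \<le> lam * laplace (p mu (n - 1)) ((lam / mu) ^ (n - 1) * s) \<and>
      lam * laplace (p mu (n - 1)) ((lam / mu) ^ (n - 1) * s) \<le> 1 - s / (s + 1 / scaled_last_passage_time lam mu n)"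
    using eventually_gt_at_top[of 0]
    by eventually_elim (rule forward_laplace_bounds_scaled[OF lam _ n forward \<open>s \<ge> 0\<close>])
qed (use lam \<open>s \<ge> 0\<close> in simp_all)

theorem mainTheorem1:
  fixes n :: nat and lam :: real and p :: "real \<Rightarrow> nat \<Rightarrow> real \<Rightarrow> real"
  assumes "n \<ge> 2" and "lam > 0"
    and "\<And>mu. mu > 0 \<Longrightarrow> forward_dist lam mu n (p mu)"
  shows "(\<forall>t\<ge>0. ((\<lambda>mu. 1 - p mu n (t / (lam / mu) ^ (n - 1))) \<longlongrightarrow> exp (- lam * t)) at_top) \<and>
         (\<forall>s\<ge>0. ((\<lambda>mu. lst (\<lambda>t. if t < 0 then 0 else p mu n t) (s * (lam / mu) ^ (n - 1)))
                  \<longlongrightarrow> lam / (lam + s)) at_top) \<and>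
         (\<forall>mu>0. \<forall>t\<ge>0. (p mu n has_real_derivative lam * p mu (n - 1) t) (at t within {0..})) \<and>
         (\<forall>s\<ge>0. ((\<lambda>mu. laplace (p mu (n - 1)) ((lam / mu) ^ (n - 1) * s)) \<longlongrightarrow> 1 / (lam + s)) at_top)"
proof -
  have lam_laplace: "((\<lambda>mu. lam * laplace (p mu (n - 1)) ((lam / mu) ^ (n - 1) * s)) \<longlongrightarrow> lam / (lam + s)) at_top"
    if "s \<ge> 0" for s
    by (intro forward_laplace_scaled_tendsto assms that)
  have "((\<lambda>mu. lst (\<lambda>t. if t < 0 then 0 else p mu n t) (s * (lam / mu) ^ (n - 1))) \<longlongrightarrow> lam / (lam + s)) at_top"
    if "s \<ge> 0" for s
  proof (rule Lim_transform_eventually[OF lam_laplace[OF that]])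
    show "\<forall>\<^sub>F mu in at_top. lam * laplace (p mu (n - 1)) ((lam / mu) ^ (n - 1) * s) =
        lst (\<lambda>t. if t < 0 then 0 else p mu n t) (s * (lam / mu) ^ (n - 1))"
      using eventually_gt_at_top[of 0] by eventually_elim (simp add: forward_lst_eq[OF assms(2) _ assms(1) assms(3)] mult.commute)
  qed
  moreover have "((\<lambda>mu. laplace (p mu (n - 1)) ((lam / mu) ^ (n - 1) * s)) \<longlongrightarrow> 1 / (lam + s)) at_top"
    if "s \<ge> 0" for s
    using tendsto_divide[OF lam_laplace[OF that] tendsto_const[of lam]] assms(2) by simp
  ultimately show ?thesis
    using forward_survival_scaled_tendsto[of n lam p] absorbed_deriv[OF assms(2) _ assms(1) assms(3)] assms by blast
qed

end
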